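(* Let $m\ge2$ and $G=CK(2m-1)$. If $B$ is a set of edges of $G$ having an edge in common with every simple Hamiltonian path of $G$, then $|B|\ge m$.
   Context: $CK(2m-1)$ is the complete convex geometric graph on $2m-1$ points in convex position in the plane, labelled cyclically $0,\dots,2m-2$ (elements of $\mathbb{Z}_{2m-1}$), with all segments between vertices as edges. A simple Hamiltonian path is a path through all vertices whose edges pairwise do not cross. *)

theory Defs
  imports Main
begin

text \<open>The complete convex geometric graph CK(n): vertices 0,...,n-1 in convex
position in cyclic order; edges are all 2-element subsets.\<close>

definition ck_edges :: "nat \<Rightarrow> nat set set" where
  "ck_edges n = {{a, b} | a b. a < n \<and> b < n \<and> a \<noteq> b}"

text \<open>Two segments between points in convex position cross iff their four
endpoints are distinct and interleave in the cyclic (equivalently, linear) order.\<close>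

definition crosses :: "nat set \<Rightarrow> nat set \<Rightarrow> bool" where
  "crosses e f \<longleftrightarrow> (\<exists>a b c d. a < c \<and> c < b \<and> b < d \<and>
      ((e = {a, b} \<and> f = {c, d}) \<or> (e = {c, d} \<and> f = {a, b})))"

definition path_edges :: "nat list \<Rightarrow> nat set set" where
  "path_edges p = {{p ! i, p ! Suc i} | i. Suc i < length p}"

definition simple_ham_path :: "nat \<Rightarrow> nat list \<Rightarrow> bool" where
  "simple_ham_path n p \<longleftrightarrow> distinct p \<and> set p = {0..<n} \<and>
      (\<forall>e \<in> path_edges p. \<forall>f \<in> path_edges p. \<not> crosses e f)"

end

theory Submission
  imports Defs "HOL-Library.FuncSet" "HOL-Number_Theory.Cong"
begin

text \<open>For each rotation \<open>r\<close> consider the zigzag path \<open>r, r - 1, r + 1, r - 2, r + 2, \<dots>\<close>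
  (modulo \<open>n\<close>). Consecutive vertices sum to \<open>2r - 1\<close> or \<open>2r\<close> modulo \<open>n\<close>, whereas the endpoint
  sums of two crossing chords differ by between 2 and \<open>n - 2\<close>; so every zigzag path is a simple
  Hamiltonian path. For odd \<open>n\<close> the doubling map is injective modulo \<open>n\<close>, so a chord lies on at
  most two of the \<open>n\<close> zigzag paths, and a set of chords meeting all of them has at least
  \<open>n / 2\<close> elements.\<close>

definition zigzag :: "nat \<Rightarrow> nat \<Rightarrow> nat" where
  "zigzag n j = (if even j then j div 2 else n - 1 - j div 2)"

definition zigzag_path :: "nat \<Rightarrow> nat \<Rightarrow> nat list" where
  "zigzag_path n r = map (\<lambda>j. (r + zigzag n j) mod n) [0..<n]"

lemma inj_on_zigzag: "inj_on (zigzag n) {..<n}"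
  unfolding inj_on_def zigzag_def by (auto elim!: evenE oddE)

lemma zigzag_less: "j < n \<Longrightarrow> zigzag n j < n"
  by (simp add: zigzag_def le_less_trans[OF div_le_dividend])

lemma zigzag_add_Suc:
  assumes "Suc j < n"
  shows "zigzag n j + zigzag n (Suc j) + (if even j then 1 else 0) = n"
proof (cases "even j")
  case True
  then obtain k where "j = 2 * k" by blast
  then show ?thesis using assms by (simp add: zigzag_def)
next
  case False
  then obtain k where "j = 2 * k + 1" using oddE by blast
  then show ?thesis using assms by (simp add: zigzag_def)
qed

lemma length_zigzag_path [simp]: "length (zigzag_path n r) = n"
  by (simp add: zigzag_path_def)

lemma nth_zigzag_path: "j < n \<Longrightarrow> zigzag_path n r ! j = (r + zigzag n j) mod n"
  by (simp add: zigzag_path_def)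

lemma distinct_zigzag_path: "distinct (zigzag_path n r)"
proof -
  have "inj_on (\<lambda>j. (r + zigzag n j) mod n) {..<n}"
  proof (rule inj_onI)
    fix i j assume i: "i \<in> {..<n}" and j: "j \<in> {..<n}"
      and "(r + zigzag n i) mod n = (r + zigzag n j) mod n"
    then have "[zigzag n i = zigzag n j] (mod n)"
      by (simp add: cong_def[symmetric] cong_add_lcancel_nat)
    then have "zigzag n i = zigzag n j"
      using i j by (simp add: cong_less_modulus_unique_nat zigzag_less)
    then show "i = j"
      using i j inj_on_zigzag by (auto dest: inj_onD)
  qed
  then show ?thesis
    unfolding zigzag_path_def by (simp add: distinct_map atLeast0LessThan)
qed

lemma set_zigzag_path: "set (zigzag_path n r) = {0..<n}"
proof (rule card_subset_eq)
  show "set (zigzag_path n r) \<subseteq> {0..<n}"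
    unfolding zigzag_path_def by auto
  show "card (set (zigzag_path n r)) = card {0..<n}"
    using distinct_card[OF distinct_zigzag_path] by simp
qed simp

lemma zigzag_path_edge_sum:
  assumes "e \<in> path_edges (zigzag_path n r)"
  shows "\<exists>i\<le>1. [\<Sum>e + i = 2 * r] (mod n)"
proof -
  let ?p = "zigzag_path n r"
  obtain j where e: "e = {?p ! j, ?p ! Suc j}" and j: "Suc j < n"
    using assms unfolding path_edges_def by auto
  let ?i = "if even j then 1 else 0 :: nat"
  have "?p ! j \<noteq> ?p ! Suc j"
    using distinct_zigzag_path j by (simp add: nth_eq_iff_index_eq)
  then have "\<Sum>e + ?i = ?p ! j + ?p ! Suc j + ?i"
    using e by simp
  also have "[\<dots> = (r + zigzag n j) + (r + zigzag n (Suc j)) + ?i] (mod n)"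
    using j by (intro cong_add) (simp_all add: nth_zigzag_path)
  also have "(r + zigzag n j) + (r + zigzag n (Suc j)) + ?i = 2 * r + n"
    using zigzag_add_Suc[OF j] by simp
  also have "[2 * r + n = 2 * r] (mod n)"
    by (simp add: cong_def)
  finally show ?thesis
    by (intro exI[of _ ?i]) simp
qed

lemma path_edges_subset_set: "e \<in> path_edges p \<Longrightarrow> e \<subseteq> set p"
  unfolding path_edges_def by auto

text \<open>\<open>c + d - (a + b) = (c - a) + (d - b)\<close> lies between 2 and \<open>n - 2\<close>, so the shifts by
  \<open>i\<close> and \<open>j\<close> cannot make the two sums congruent.\<close>

lemma interleaved_sums_not_cong:
  fixes a b c d n i j :: nat
  assumes "a < c" "c < b" "b < d" "d < n" "i \<le> 1" "j \<le> 1"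
  shows "\<not> [a + b + i = c + d + j] (mod n)"
proof
  assume "[a + b + i = c + d + j] (mod n)"
  then have "n dvd (c + d + j) - (a + b + i)"
    using assms by (subst cong_altdef_nat[symmetric]) (auto simp: cong_sym_eq)
  moreover have "0 < (c + d + j) - (a + b + i)" "(c + d + j) - (a + b + i) < n"
    using assms by linarith+
  ultimately show False
    using nat_dvd_not_less by blast
qed

lemma crosses_imp_not_cong_sum:
  assumes "crosses e f" "e \<union> f \<subseteq> {..<n}" "i \<le> 1" "j \<le> 1"
  shows "\<not> [\<Sum>e + i = \<Sum>f + j] (mod n)"
proof -
  obtain a b c d where abcd: "a < c" "c < b" "b < d"
    and "(e = {a, b} \<and> f = {c, d}) \<or> (e = {c, d} \<and> f = {a, b})"
    using assms(1) unfolding crosses_def by blast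
  then consider "e = {a, b}" "f = {c, d}" | "e = {c, d}" "f = {a, b}"
    by blast
  then show ?thesis
  proof cases
    case 1
    then show ?thesis
      using interleaved_sums_not_cong[OF abcd, of n i j] abcd assms(2-4) by auto
  next
    case 2
    then show ?thesis
      using interleaved_sums_not_cong[OF abcd, of n j i] abcd assms(2-4) by (auto simp: cong_sym_eq)
  qed
qed

lemma simple_ham_path_zigzag_path: "simple_ham_path n (zigzag_path n r)"
  unfolding simple_ham_path_def
proof (intro conjI ballI notI)
  fix e f
  assume e: "e \<in> path_edges (zigzag_path n r)" and f: "f \<in> path_edges (zigzag_path n r)"
    and "crosses e f"
  obtain i j where "i \<le> 1" "j \<le> 1" "[\<Sum>e + i = 2 * r] (mod n)" "[\<Sum>f + j = 2 * r] (mod n)"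
    using zigzag_path_edge_sum[OF e] zigzag_path_edge_sum[OF f] by blast
  moreover have "e \<union> f \<subseteq> {..<n}"
    using e f path_edges_subset_set set_zigzag_path by fastforce
  ultimately show False
    using crosses_imp_not_cong_sum[OF \<open>crosses e f\<close>] by (meson cong_sym cong_trans)
qed (simp_all add: distinct_zigzag_path set_zigzag_path)

lemma card_cong_double_le_1:
  fixes n s :: nat
  assumes "odd n"
  shows "card {r \<in> {..<n}. [s = 2 * r] (mod n)} \<le> 1"
proof -
  have "r = r'" if "r \<in> {..<n}" "r' \<in> {..<n}" "[s = 2 * r] (mod n)" "[s = 2 * r'] (mod n)"
    for r r'
  proof (rule cong_less_modulus_unique_nat)
    have "[2 * r = 2 * r'] (mod n)"
      using that(3,4) by (meson cong_sym cong_trans)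
    then show "[r = r'] (mod n)"
      using assms by (simp add: cong_mult_lcancel_nat)
  qed (use that in auto)
  then show ?thesis
    unfolding One_nat_def by (subst card_le_Suc0_iff_eq) auto
qed

lemma card_zigzag_paths_containing_le_2:
  assumes "odd n"
  shows "card {r \<in> {..<n}. e \<in> path_edges (zigzag_path n r)} \<le> 2"
proof -
  let ?S = "\<lambda>i. {r \<in> {..<n}. [\<Sum>e + i = 2 * r] (mod n)}"
  have "{r \<in> {..<n}. e \<in> path_edges (zigzag_path n r)} \<subseteq> ?S 0 \<union> ?S 1"
    using zigzag_path_edge_sum by (fastforce simp: le_Suc_eq)
  then have "card {r \<in> {..<n}. e \<in> path_edges (zigzag_path n r)} \<le> card (?S 0 \<union> ?S 1)"
    by (rule card_mono[rotated]) simp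
  also have "\<dots> \<le> card (?S 0) + card (?S 1)"
    by (rule card_Un_le)
  also have "\<dots> \<le> 2"
    using card_cong_double_le_1[OF assms, of "\<Sum>e"] card_cong_double_le_1[OF assms, of "\<Sum>e + 1"]
    by simp
  finally show ?thesis .
qed

lemma finite_ck_edges: "finite (ck_edges n)"
proof (rule finite_subset)
  show "ck_edges n \<subseteq> Pow {..<n}"
    unfolding ck_edges_def by auto
qed simp

theorem proposition1:
  fixes m :: nat and B :: "nat set set"
  assumes "m \<ge> 2"
    and "B \<subseteq> ck_edges (2 * m - 1)"
    and "\<forall>p. simple_ham_path (2 * m - 1) p \<longrightarrow> B \<inter> path_edges p \<noteq> {}"
  shows "card B \<ge> m"
proof -
  define n where "n = 2 * m - 1"
  have n: "n = 2 * (m - 1) + 1"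
    using assms(1) unfolding n_def by simp
  have "\<forall>r \<in> {..<n}. \<exists>e. e \<in> B \<inter> path_edges (zigzag_path n r)"
    using assms(3) simple_ham_path_zigzag_path unfolding n_def by blast
  then obtain h where h: "\<forall>r \<in> {..<n}. h r \<in> B \<inter> path_edges (zigzag_path n r)"
    by (metis bchoice)
  have "finite B" "B \<noteq> {}"
    using finite_subset[OF assms(2) finite_ck_edges] h n by auto
  then obtain e where "n \<le> card (h -` {e} \<inter> {..<n}) * card B"
    using pigeonhole_card[of h "{..<n}" B] h by auto
  moreover have "card (h -` {e} \<inter> {..<n}) \<le> 2"
  proof (rule order_trans[OF card_mono])
    show "h -` {e} \<inter> {..<n} \<subseteq> {r \<in> {..<n}. e \<in> path_edges (zigzag_path n r)}"
      using h by auto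
    show "card {r \<in> {..<n}. e \<in> path_edges (zigzag_path n r)} \<le> 2"
      using n by (intro card_zigzag_paths_containing_le_2) simp
  qed simp
  ultimately have "n \<le> 2 * card B"
    using mult_le_mono1 order_trans by blast
  then show ?thesis
    using n by linarith
qed

end
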